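(* Let $\omega(a,\beta)$ be any function with $W^{(n)}(a,\beta)\le\omega(a,\beta)$ whenever $W^{(n)}(a,\beta)$ is defined. Then for $a,\rho\in(0,1)$ with $2^na\in\mathbb Z$, $\mathbf{MaxStab}_\Phi(a)\le\Upsilon_\rho(a)$, where $$\Upsilon_\rho(a):=\sup_{\beta,P_{Z|SX}}\mathbb E[\Phi(a+\rho Z)]$$ subject to $0\le\beta\le\min\{a,1-a\}$, $0\le a+\rho Z\le1$ a.s., $\mathbb EZ=0$, $\mathbb E[XZ]=\beta$, $\mathbb E[Z^2]\le(1-\rho)\omega(a,\beta)+\rho\mathbb E[SZ]$, where $(S,X,Z)\sim P_{SX}P_{Z|SX}$ with $P_{SX}(-a,-1)=\frac{1-a+\beta}2$, $P_{SX}(-a,1)=\frac{1-a-\beta}2$, $P_{SX}(1-a,-1)=\frac{a-\beta}2$, $P_{SX}(1-a,1)=\frac{a+\beta}2$, and the supremum is over $\beta$ and conditional probability mass functions $P_{Z|SX}$ of a real random variable $Z$.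
   Context: $\mathbf X$ uniform on $\{-1,1\}^n$; $\mathbf Y$ obtained by independently flipping each coordinate of $\mathbf X$ with probability $(1-\rho)/2$; $T_\rho f(\mathbf x)=\mathbb E[f(\mathbf Y)\mid\mathbf X=\mathbf x]$; $\Phi:[0,1]\to\mathbb R$ continuous and strictly convex; $\mathbf{MaxStab}_\Phi(a)=\max\{\mathbb E[\Phi(T_\rho f(\mathbf X))]:f:\{-1,1\}^n\to\{0,1\},\mathbb Ef(\mathbf X)=a\}$. For $f:\{-1,1\}^n\to\mathbb R$, $\hat f_{\{i\}}=\mathbb E[f(\mathbf X)X_i]$, $\mathbf W_1[f]=\sum_i\hat f_{\{i\}}^2$, and $W^{(n)}(a,\beta):=\max\{\mathbf W_1[f]:f\text{ Boolean},\ \mathbb Ef=a,\ \max_{i}|\hat f_{\{i\}}|=\beta\}$. *)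

theory Defs
  imports "HOL-Probability.Probability"
begin

definition strictly_convex_on :: "real set \<Rightarrow> (real \<Rightarrow> real) \<Rightarrow> bool" where
  "strictly_convex_on A \<Phi> \<longleftrightarrow> convex A \<and>
     (\<forall>x\<in>A. \<forall>y\<in>A. \<forall>t::real. x \<noteq> y \<and> 0 < t \<and> t < 1 \<longrightarrow>
        \<Phi> (t * x + (1 - t) * y) < t * \<Phi> x + (1 - t) * \<Phi> y)"

text \<open>The Boolean cube \<open>{-1,1}^n\<close>: points are functions on \<open>{..<n}\<close>
  (extensional, value \<open>undefined\<close> outside).\<close>
definition cube :: "nat \<Rightarrow> (nat \<Rightarrow> real) set" where
  "cube n = PiE {..<n} (\<lambda>_. {-1, 1})"

definition Ecube :: "nat \<Rightarrow> ((nat \<Rightarrow> real) \<Rightarrow> real) \<Rightarrow> real" where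
  "Ecube n f = (\<Sum>x\<in>cube n. f x) / 2 ^ n"

text \<open>Noise operator: \<open>Y\<close> flips each coordinate of \<open>X\<close> independently
  with probability \<open>(1-\<rho>)/2\<close>.\<close>
definition noise_op :: "nat \<Rightarrow> real \<Rightarrow> ((nat \<Rightarrow> real) \<Rightarrow> real) \<Rightarrow> (nat \<Rightarrow> real) \<Rightarrow> real" where
  "noise_op n \<rho> f x =
     (\<Sum>y\<in>cube n. (\<Prod>i<n. if y i = x i then (1 + \<rho>) / 2 else (1 - \<rho>) / 2) * f y)"

definition boolean_fun :: "nat \<Rightarrow> ((nat \<Rightarrow> real) \<Rightarrow> real) \<Rightarrow> bool" where
  "boolean_fun n f \<longleftrightarrow> (\<forall>x\<in>cube n. f x \<in> {0, 1})"

definition MaxStab :: "nat \<Rightarrow> real \<Rightarrow> (real \<Rightarrow> real) \<Rightarrow> real \<Rightarrow> real" where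
  "MaxStab n \<rho> \<Phi> a =
     Max {Ecube n (\<lambda>x. \<Phi> (noise_op n \<rho> f x)) | f. boolean_fun n f \<and> Ecube n f = a}"

definition fhat1 :: "nat \<Rightarrow> ((nat \<Rightarrow> real) \<Rightarrow> real) \<Rightarrow> nat \<Rightarrow> real" where
  "fhat1 n f i = Ecube n (\<lambda>x. f x * x i)"

definition W1 :: "nat \<Rightarrow> ((nat \<Rightarrow> real) \<Rightarrow> real) \<Rightarrow> real" where
  "W1 n f = (\<Sum>i<n. (fhat1 n f i)\<^sup>2)"

definition maxcoef :: "nat \<Rightarrow> ((nat \<Rightarrow> real) \<Rightarrow> real) \<Rightarrow> real" where
  "maxcoef n f = Max ((\<lambda>i. \<bar>fhat1 n f i\<bar>) ` {..<n})"

text \<open>Admissible functions for \<open>W^{(n)}(a,\<beta>)\<close>; \<open>W^{(n)}(a,\<beta>)\<close> is defined iff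
  this set is nonempty.\<close>
definition W_feasible :: "nat \<Rightarrow> real \<Rightarrow> real \<Rightarrow> ((nat \<Rightarrow> real) \<Rightarrow> real) set" where
  "W_feasible n a \<beta> = {f. boolean_fun n f \<and> Ecube n f = a \<and> maxcoef n f = \<beta>}"

definition Wn :: "nat \<Rightarrow> real \<Rightarrow> real \<Rightarrow> real" where
  "Wn n a \<beta> = Max (W1 n ` W_feasible n a \<beta>)"

definition PSX :: "real \<Rightarrow> real \<Rightarrow> real \<Rightarrow> real \<Rightarrow> real" where
  "PSX a \<beta> s x =
     (if s = -a \<and> x = -1 then (1 - a + \<beta>) / 2
      else if s = -a \<and> x = 1 then (1 - a - \<beta>) / 2
      else if s = 1 - a \<and> x = -1 then (a - \<beta>) / 2
      else if s = 1 - a \<and> x = 1 then (a + \<beta>) / 2 else 0)"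

definition SXpts :: "real \<Rightarrow> (real \<times> real) set" where
  "SXpts a = {(-a, -1), (-a, 1), (1 - a, -1), (1 - a, 1)}"

text \<open>\<open>E[g(S,X,Z)]\<close> for \<open>(S,X,Z) \<sim> P_{SX} P_{Z|SX}\<close>, the conditional pmf being
  the kernel \<open>K\<close>.\<close>
definition EJ :: "real \<Rightarrow> real \<Rightarrow> (real \<Rightarrow> real \<Rightarrow> real pmf)
                   \<Rightarrow> (real \<Rightarrow> real \<Rightarrow> real \<Rightarrow> real) \<Rightarrow> real" where
  "EJ a \<beta> K g = (\<Sum>(s, x)\<in>SXpts a. PSX a \<beta> s x *
                    measure_pmf.expectation (K s x) (\<lambda>z. g s x z))"

definition Ups_feasible :: "real \<Rightarrow> real \<Rightarrow> (real \<Rightarrow> real \<Rightarrow> real)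
                              \<Rightarrow> (real \<times> (real \<Rightarrow> real \<Rightarrow> real pmf)) set" where
  "Ups_feasible \<rho> a \<omega> = {(\<beta>, K).
     0 \<le> \<beta> \<and> \<beta> \<le> min a (1 - a) \<and>
     (\<forall>(s, x)\<in>SXpts a. PSX a \<beta> s x > 0 \<longrightarrow>
        (\<forall>z\<in>set_pmf (K s x). 0 \<le> a + \<rho> * z \<and> a + \<rho> * z \<le> 1)) \<and>
     EJ a \<beta> K (\<lambda>s x z. z) = 0 \<and>
     EJ a \<beta> K (\<lambda>s x z. x * z) = \<beta> \<and>
     EJ a \<beta> K (\<lambda>s x z. z\<^sup>2) \<le> (1 - \<rho>) * \<omega> a \<beta> + \<rho> * EJ a \<beta> K (\<lambda>s x z. s * z)}"

text \<open>\<open>\<Upsilon>_\<rho>(a)\<close>, as an extended real (supremum of the empty set is \<open>-\<infinity>\<close>).\<close>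
definition Upsilon :: "real \<Rightarrow> (real \<Rightarrow> real) \<Rightarrow> (real \<Rightarrow> real \<Rightarrow> real) \<Rightarrow> real \<Rightarrow> ereal" where
  "Upsilon \<rho> \<Phi> \<omega> a =
     (SUP (\<beta>, K)\<in>Ups_feasible \<rho> a \<omega>. ereal (EJ a \<beta> K (\<lambda>s x z. \<Phi> (a + \<rho> * z))))"

end

theory Submission
  imports Defs
begin

(* Let f attain MaxStab(a). Under the uniform measure on the cube put S = f - a,
   X = \<plusminus>x_i for a coordinate i of largest degree-1 coefficient (signed so that
   E[X f] = \<beta>), and Z = (T_\<rho> f - a) / \<rho>; take P_{Z|SX} to be the empirical conditional law
   of Z. Then (S, X) has law P_{SX}, E[Z] = 0, E[X Z] = \<beta> and E[\<Phi>(a + \<rho> Z)] = MaxStab(a).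
   The second-moment constraint is spectral: by Parseval,
     E[Z^2] - \<rho> E[S Z] = (sum over S \<noteq> {} of f^(S)^2 (\<rho>^(2|S|) - \<rho>^(|S|+2))) / \<rho>^2,
   where only the terms with |S| = 1 are positive, and they add up to (1 - \<rho>) W_1[f].
   No property of \<Phi> is needed. *)

definition walsh :: "nat \<Rightarrow> nat set \<Rightarrow> (nat \<Rightarrow> real) \<Rightarrow> real" where
  "walsh n S x = (\<Prod>i<n. if i \<in> S then x i else 1)"

definition fourier_coef :: "nat \<Rightarrow> ((nat \<Rightarrow> real) \<Rightarrow> real) \<Rightarrow> nat set \<Rightarrow> real" where
  "fourier_coef n f S = Ecube n (\<lambda>x. f x * walsh n S x)"

lemma finite_cube [simp]: "finite (cube n)"
  unfolding cube_def by (intro finite_PiE) auto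

lemma card_cube: "card (cube n) = 2 ^ n"
  unfolding cube_def by (subst card_PiE) (auto simp: numeral_2_eq_2)

lemma cube_coord: "x \<in> cube n \<Longrightarrow> i < n \<Longrightarrow> x i = -1 \<or> x i = 1"
  unfolding cube_def by (auto simp: PiE_iff)

lemma sum_cube_prod:
  fixes g :: "nat \<Rightarrow> real \<Rightarrow> real"
  shows "(\<Sum>x\<in>cube n. \<Prod>i<n. g i (x i)) = (\<Prod>i<n. g i (-1) + g i 1)"
proof -
  have "(\<Prod>i<n. \<Sum>y\<in>{-1,1::real}. g i y) = (\<Sum>x\<in>cube n. \<Prod>i<n. g i (x i))"
    unfolding cube_def by (rule prod_sum_PiE) auto
  then show ?thesis by simp
qed

lemma cube_coord_square: "x \<in> cube n \<Longrightarrow> i < n \<Longrightarrow> x i * x i = 1"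
  using cube_coord by fastforce

lemma Ecube_cong: "(\<And>x. x \<in> cube n \<Longrightarrow> f x = g x) \<Longrightarrow> Ecube n f = Ecube n g"
  unfolding Ecube_def by (simp cong: sum.cong)

lemma noise_op_cong:
  "(\<And>x. x \<in> cube n \<Longrightarrow> f x = g x) \<Longrightarrow> noise_op n \<rho> f y = noise_op n \<rho> g y"
  unfolding noise_op_def by (simp cong: sum.cong)

lemma Ecube_const [simp]: "Ecube n (\<lambda>x. c) = c"
  unfolding Ecube_def by (simp add: card_cube)

lemma Ecube_add: "Ecube n (\<lambda>x. f x + g x) = Ecube n f + Ecube n g"
  unfolding Ecube_def by (simp add: sum.distrib add_divide_distrib)

lemma Ecube_diff: "Ecube n (\<lambda>x. f x - g x) = Ecube n f - Ecube n g"
  unfolding Ecube_def by (simp add: sum_subtractf diff_divide_distrib)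

lemma Ecube_cmult: "Ecube n (\<lambda>x. c * f x) = c * Ecube n f"
  unfolding Ecube_def by (simp add: sum_distrib_left)

lemma Ecube_sum: "finite A \<Longrightarrow> Ecube n (\<lambda>x. \<Sum>T\<in>A. h T x) = (\<Sum>T\<in>A. Ecube n (h T))"
  unfolding Ecube_def by (subst sum.swap) (simp add: sum_divide_distrib)

lemma walsh_empty [simp]: "walsh n {} x = 1"
  unfolding walsh_def by simp

lemma walsh_singleton: "i < n \<Longrightarrow> walsh n {i} x = x i"
  unfolding walsh_def by simp

lemma walsh_orthogonal:
  assumes "S \<subseteq> {..<n}" "T \<subseteq> {..<n}"
  shows "Ecube n (\<lambda>x. walsh n S x * walsh n T x) = (if S = T then 1 else 0)"
proof -
  have "(\<Sum>x\<in>cube n. walsh n S x * walsh n T x) =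
        (\<Sum>x\<in>cube n. \<Prod>i<n. (if i \<in> S then x i else 1) * (if i \<in> T then x i else 1))"
    unfolding walsh_def by (simp add: prod.distrib)
  also have "\<dots> = (\<Prod>i<n. if (i \<in> S) = (i \<in> T) then 2 else 0)"
    by (subst sum_cube_prod) (auto intro!: prod.cong)
  also have "\<dots> = (if S = T then 2 ^ n else 0)"
  proof (cases "S = T")
    case False
    then obtain i where "i < n" "(i \<in> S) \<noteq> (i \<in> T)" using assms by blast
    then show ?thesis using False by (auto intro!: prod_zero)
  qed simp
  finally show ?thesis unfolding Ecube_def by simp
qed

lemma Ecube_coord: "i < n \<Longrightarrow> Ecube n (\<lambda>x. x i) = 0"
  using walsh_orthogonal[of "{i}" n "{}"] by (simp add: walsh_singleton)

lemma sum_walsh_walsh: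
  assumes "x \<in> cube n" "y \<in> cube n"
  shows "(\<Sum>S\<in>Pow {..<n}. walsh n S y * walsh n S x) = (if y = x then 2 ^ n else 0)"
proof -
  have "(\<Sum>S\<in>Pow {..<n}. walsh n S y * walsh n S x) = (\<Sum>S\<in>Pow {..<n}. \<Prod>i\<in>S. y i * x i)"
    unfolding walsh_def
    by (intro sum.cong refl)
      (auto simp: prod.distrib[symmetric] prod.If_cases Int_absorb1 Int_absorb2 intro!: prod.cong)
  also have "\<dots> = (\<Prod>i<n. y i * x i + 1)"
    by (simp add: prod_add)
  also have "\<dots> = (if y = x then 2 ^ n else 0)"
  proof (cases "y = x")
    case True
    have "(\<Prod>i<n. x i * x i + 1) = (\<Prod>i<n. (2::real))"
      using cube_coord_square[OF assms(1)] by (intro prod.cong) auto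
    then show ?thesis using True by simp
  next
    case False
    then obtain i where "i < n" "y i \<noteq> x i"
      using assms unfolding cube_def by (metis PiE_ext lessThan_iff)
    then have "y i * x i + 1 = 0"
      using cube_coord[OF assms(1), of i] cube_coord[OF assms(2), of i] by auto
    then show ?thesis using False \<open>i < n\<close> by (auto intro!: prod_zero)
  qed
  finally show ?thesis .
qed

lemma fourier_expansion:
  assumes "x \<in> cube n"
  shows "f x = (\<Sum>S\<in>Pow {..<n}. fourier_coef n f S * walsh n S x)"
proof -
  have "(\<Sum>S\<in>Pow {..<n}. fourier_coef n f S * walsh n S x)
      = (\<Sum>S\<in>Pow {..<n}. \<Sum>y\<in>cube n. f y / 2 ^ n * (walsh n S y * walsh n S x))"
    unfolding fourier_coef_def Ecube_def sum_divide_distrib sum_distrib_right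
    by (intro sum.cong refl) (simp add: mult_ac)
  also have "\<dots> = (\<Sum>y\<in>cube n. f y / 2 ^ n * (\<Sum>S\<in>Pow {..<n}. walsh n S y * walsh n S x))"
    by (subst sum.swap) (simp add: sum_distrib_left)
  also have "\<dots> = (\<Sum>y\<in>cube n. if y = x then f x else 0)"
    by (intro sum.cong refl) (simp add: sum_walsh_walsh assms)
  finally show ?thesis using assms by simp
qed

lemma fourier_coef_of_expansion:
  assumes "T \<subseteq> {..<n}"
  shows "Ecube n (\<lambda>x. (\<Sum>S\<in>Pow {..<n}. d S * walsh n S x) * walsh n T x) = d T"
proof -
  have "Ecube n (\<lambda>x. (\<Sum>S\<in>Pow {..<n}. d S * walsh n S x) * walsh n T x)
      = (\<Sum>S\<in>Pow {..<n}. d S * Ecube n (\<lambda>x. walsh n S x * walsh n T x))"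
    by (simp add: sum_distrib_right mult.assoc Ecube_sum Ecube_cmult)
  also have "\<dots> = (\<Sum>S\<in>Pow {..<n}. if S = T then d T else 0)"
    by (intro sum.cong refl) (auto simp: walsh_orthogonal assms)
  finally show ?thesis using assms by simp
qed

lemma parseval:
  "Ecube n (\<lambda>x. (\<Sum>S\<in>Pow {..<n}. d S * walsh n S x) * (\<Sum>S\<in>Pow {..<n}. e S * walsh n S x))
     = (\<Sum>S\<in>Pow {..<n}. d S * e S)"
proof -
  have "Ecube n (\<lambda>x. (\<Sum>S\<in>Pow {..<n}. d S * walsh n S x) * (\<Sum>S\<in>Pow {..<n}. e S * walsh n S x))
     = (\<Sum>T\<in>Pow {..<n}. e T * Ecube n (\<lambda>x. (\<Sum>S\<in>Pow {..<n}. d S * walsh n S x) * walsh n T x))"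
    by (simp add: sum_distrib_left mult_ac Ecube_sum Ecube_cmult)
  also have "\<dots> = (\<Sum>T\<in>Pow {..<n}. e T * d T)"
    by (intro sum.cong refl) (simp add: fourier_coef_of_expansion)
  finally show ?thesis by (simp add: mult_ac)
qed

lemma parseval_fourier_coef:
  "Ecube n (\<lambda>x. f x * g x) = (\<Sum>S\<in>Pow {..<n}. fourier_coef n f S * fourier_coef n g S)"
  by (subst parseval[symmetric], rule Ecube_cong) (simp add: fourier_expansion[symmetric])

lemma noise_op_walsh:
  assumes "x \<in> cube n" "S \<subseteq> {..<n}"
  shows "noise_op n \<rho> (walsh n S) x = \<rho> ^ card S * walsh n S x"
proof -
  have "noise_op n \<rho> (walsh n S) x =
     (\<Sum>y\<in>cube n. \<Prod>i<n.
        (if y i = x i then (1 + \<rho>) / 2 else (1 - \<rho>) / 2) * (if i \<in> S then y i else 1))"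
    unfolding noise_op_def walsh_def by (simp add: prod.distrib)
  also have "\<dots> = (\<Prod>i<n. (if i \<in> S then \<rho> else 1) * (if i \<in> S then x i else 1))"
    using cube_coord[OF assms(1)]
    by (subst sum_cube_prod, intro prod.cong refl) (fastforce simp: field_simps)
  also have "\<dots> = \<rho> ^ card S * walsh n S x"
    unfolding walsh_def prod.distrib using assms(2)
    by (simp add: prod.If_cases Int_absorb1 Int_absorb2)
  finally show ?thesis .
qed

lemma noise_op_fourier_expansion:
  assumes "x \<in> cube n"
  shows "noise_op n \<rho> f x = (\<Sum>S\<in>Pow {..<n}. (\<rho> ^ card S * fourier_coef n f S) * walsh n S x)"
proof -
  have "noise_op n \<rho> f x = noise_op n \<rho> (\<lambda>y. \<Sum>S\<in>Pow {..<n}. fourier_coef n f S * walsh n S y) x"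
    unfolding noise_op_def by (intro sum.cong refl) (simp add: fourier_expansion[symmetric])
  also have "\<dots> = (\<Sum>S\<in>Pow {..<n}. fourier_coef n f S * noise_op n \<rho> (walsh n S) x)"
    unfolding noise_op_def
    by (simp add: sum_distrib_left sum_distrib_right mult_ac sum.swap[where A = "cube n"])
  also have "\<dots> = (\<Sum>S\<in>Pow {..<n}. (\<rho> ^ card S * fourier_coef n f S) * walsh n S x)"
    by (intro sum.cong refl) (simp add: noise_op_walsh assms)
  finally show ?thesis .
qed

lemma fourier_coef_noise_op:
  assumes "S \<subseteq> {..<n}"
  shows "fourier_coef n (noise_op n \<rho> f) S = \<rho> ^ card S * fourier_coef n f S"
proof -
  have "fourier_coef n (noise_op n \<rho> f) S = Ecube n (\<lambda>x.
      (\<Sum>T\<in>Pow {..<n}. (\<rho> ^ card T * fourier_coef n f T) * walsh n T x) * walsh n S x)"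
    unfolding fourier_coef_def[of n "noise_op n \<rho> f"]
    by (intro Ecube_cong) (simp add: noise_op_fourier_expansion)
  then show ?thesis by (simp add: fourier_coef_of_expansion assms)
qed

lemma Ecube_eq_fourier_coef_empty: "Ecube n f = fourier_coef n f {}"
  by (simp add: fourier_coef_def)

lemma fhat1_eq_fourier_coef: "i < n \<Longrightarrow> fhat1 n f i = fourier_coef n f {i}"
  unfolding fhat1_def fourier_coef_def by (intro Ecube_cong) (simp add: walsh_singleton)

lemma Ecube_noise_op: "Ecube n (noise_op n \<rho> f) = Ecube n f"
  using fourier_coef_noise_op[of "{}" n \<rho> f] by (simp add: Ecube_eq_fourier_coef_empty)

lemma Ecube_noise_op_coord:
  "i < n \<Longrightarrow> Ecube n (\<lambda>x. noise_op n \<rho> f x * x i) = \<rho> * fhat1 n f i"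
  using fourier_coef_noise_op[of "{i}" n \<rho> f]
  by (simp add: fhat1_eq_fourier_coef fhat1_def[symmetric])

lemma noise_op_boolean_range:
  assumes "boolean_fun n f" "x \<in> cube n" "0 \<le> \<rho>" "\<rho> \<le> 1"
  shows "0 \<le> noise_op n \<rho> f x \<and> noise_op n \<rho> f x \<le> 1"
proof -
  define w where "w y = (\<Prod>i<n. if y i = x i then (1 + \<rho>) / 2 else (1 - \<rho>) / 2)" for y
  have w_nonneg: "w y \<ge> 0" for y unfolding w_def using assms by (intro prod_nonneg) auto
  have "(\<Sum>y\<in>cube n. w y) = 1"
    using noise_op_walsh[OF assms(2), of "{}" \<rho>] unfolding noise_op_def w_def by simp
  moreover have "0 \<le> f y \<and> f y \<le> 1" if "y \<in> cube n" for y
    using assms(1) that unfolding boolean_fun_def by auto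
  ultimately show ?thesis
    unfolding noise_op_def w_def[symmetric] using w_nonneg
    by (auto intro!: sum_nonneg order.trans[OF sum_mono[of _ _ w] eq_refl] mult_left_le)
qed

lemma Ecube_boolean_range:
  assumes "boolean_fun n f"
  shows "0 \<le> Ecube n f \<and> Ecube n f \<le> 1"
proof -
  have f01: "0 \<le> f x \<and> f x \<le> 1" if "x \<in> cube n" for x
    using assms that unfolding boolean_fun_def by auto
  then have "sum f (cube n) \<le> (\<Sum>x\<in>cube n. 1)"
    by (intro sum_mono) simp
  moreover have "0 \<le> sum f (cube n)"
    using f01 by (intro sum_nonneg) simp
  ultimately show ?thesis unfolding Ecube_def by (simp add: card_cube)
qed

lemma noise_weight_bound:
  fixes \<rho> :: real
  assumes "0 < \<rho>" "\<rho> \<le> 1"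
  shows "\<rho> ^ (2 * k) - \<rho> ^ (k + 2)
    \<le> (if k = 0 then 1 - \<rho>\<^sup>2 else if k = 1 then \<rho>\<^sup>2 * (1 - \<rho>) else 0)"
proof -
  consider "k = 0" | "k = 1" | "k \<ge> 2" by linarith
  then show ?thesis
  proof cases
    case 3
    then have "\<rho> ^ (2 * k) \<le> \<rho> ^ (k + 2)" using assms by (intro power_decreasing) auto
    then show ?thesis using 3 by simp
  qed (simp_all add: power2_eq_square algebra_simps)
qed

lemma sum_Pow_card_le_one:
  fixes g h :: "nat set \<Rightarrow> real"
  shows "(\<Sum>S\<in>Pow {..<n}. (if S = {} then g S else 0) + (if card S = 1 then h S else 0))
    = g {} + (\<Sum>i<n. h {i})"
proof -
  have "{S \<in> Pow {..<n}. card S = 1} = (\<lambda>i. {i}) ` {..<n}"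
    by (auto simp: card_1_singleton_iff)
  then have "(\<Sum>S\<in>Pow {..<n}. if card S = 1 then h S else 0) = (\<Sum>i<n. h {i})"
    by (simp add: sum.inter_filter[symmetric] sum.reindex inj_on_def del: One_nat_def)
  then show ?thesis by (simp add: sum.distrib)
qed

lemma noise_stability_bound:
  assumes "0 < \<rho>" "\<rho> \<le> 1"
  shows "Ecube n (\<lambda>x. (noise_op n \<rho> f x)\<^sup>2) - \<rho>\<^sup>2 * Ecube n (\<lambda>x. f x * noise_op n \<rho> f x)
    \<le> (1 - \<rho>\<^sup>2) * (Ecube n f)\<^sup>2 + \<rho>\<^sup>2 * (1 - \<rho>) * W1 n f"
proof -
  define c where "c = fourier_coef n f"
  define w where
    "w k = (if k = 0 then 1 - \<rho>\<^sup>2 else if k = 1 then \<rho>\<^sup>2 * (1 - \<rho>) else 0)" for k :: nat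
  have "Ecube n (\<lambda>x. (noise_op n \<rho> f x)\<^sup>2) - \<rho>\<^sup>2 * Ecube n (\<lambda>x. f x * noise_op n \<rho> f x)
      = (\<Sum>S\<in>Pow {..<n}. (c S)\<^sup>2 * (\<rho> ^ (2 * card S) - \<rho> ^ (card S + 2)))"
    unfolding power2_eq_square[of "noise_op n \<rho> f _"] parseval_fourier_coef c_def
      sum_distrib_left sum_subtractf[symmetric]
    by (intro sum.cong refl)
      (simp add: fourier_coef_noise_op power2_eq_square power_add power_mult algebra_simps)
  also have "\<dots> \<le> (\<Sum>S\<in>Pow {..<n}. (c S)\<^sup>2 * w (card S))"
    unfolding w_def using assms by (intro sum_mono mult_left_mono noise_weight_bound) auto
  also have "\<dots> = (\<Sum>S\<in>Pow {..<n}. (if S = {} then (1 - \<rho>\<^sup>2) * (c S)\<^sup>2 else 0)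
      + (if card S = 1 then \<rho>\<^sup>2 * (1 - \<rho>) * (c S)\<^sup>2 else 0))"
    by (intro sum.cong refl) (auto simp: w_def card_eq_0_iff intro: finite_subset)
  also have "\<dots> = (1 - \<rho>\<^sup>2) * (Ecube n f)\<^sup>2 + \<rho>\<^sup>2 * (1 - \<rho>) * W1 n f"
    unfolding sum_Pow_card_le_one
    by (simp add: W1_def c_def Ecube_eq_fourier_coef_empty fhat1_eq_fourier_coef sum_distrib_left)
  finally show ?thesis .
qed

definition noise_increment ::
    "nat \<Rightarrow> real \<Rightarrow> ((nat \<Rightarrow> real) \<Rightarrow> real) \<Rightarrow> (nat \<Rightarrow> real) \<Rightarrow> real" where
  "noise_increment n \<rho> f x = (noise_op n \<rho> f x - Ecube n f) / \<rho>"

lemma noise_op_eq_mean_plus_increment: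
  "\<rho> \<noteq> 0 \<Longrightarrow> noise_op n \<rho> f x = Ecube n f + \<rho> * noise_increment n \<rho> f x"
  by (simp add: noise_increment_def)

lemma Ecube_noise_increment: "Ecube n (noise_increment n \<rho> f) = 0"
proof -
  have "Ecube n (noise_increment n \<rho> f) = Ecube n (\<lambda>x. (1 / \<rho>) * noise_op n \<rho> f x - Ecube n f / \<rho>)"
    unfolding noise_increment_def by (intro Ecube_cong) (simp add: diff_divide_distrib)
  then show ?thesis unfolding Ecube_diff Ecube_cmult Ecube_noise_op by simp
qed

lemma Ecube_coord_noise_increment:
  assumes "\<rho> \<noteq> 0" "i < n"
  shows "Ecube n (\<lambda>x. x i * noise_increment n \<rho> f x) = fhat1 n f i"
proof -
  have "Ecube n (\<lambda>x. x i * noise_increment n \<rho> f x)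
      = Ecube n (\<lambda>x. (1 / \<rho>) * (noise_op n \<rho> f x * x i) - (Ecube n f / \<rho>) * x i)"
    unfolding noise_increment_def
    by (intro Ecube_cong) (simp add: algebra_simps diff_divide_distrib)
  then show ?thesis
    unfolding Ecube_diff Ecube_cmult Ecube_noise_op_coord[OF assms(2)] Ecube_coord[OF assms(2)]
    using assms(1) by simp
qed

lemma noise_increment_second_moment:
  assumes "0 < \<rho>" "\<rho> \<le> 1"
  shows "Ecube n (\<lambda>x. (noise_increment n \<rho> f x)\<^sup>2)
    \<le> (1 - \<rho>) * W1 n f + \<rho> * Ecube n (\<lambda>x. (f x - Ecube n f) * noise_increment n \<rho> f x)"
proof -
  define a where "a = Ecube n f"
  define T where "T = noise_op n \<rho> f"
  have ET: "Ecube n T = a" unfolding T_def a_def by (rule Ecube_noise_op)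
  have "Ecube n (\<lambda>x. (noise_increment n \<rho> f x)\<^sup>2)
      = Ecube n (\<lambda>x. (1 / \<rho>\<^sup>2) * (T x)\<^sup>2 - (2 * a / \<rho>\<^sup>2) * T x + a\<^sup>2 / \<rho>\<^sup>2)"
    unfolding noise_increment_def T_def a_def using assms
    by (intro Ecube_cong) (simp add: power2_eq_square field_simps)
  also have "\<dots> = (Ecube n (\<lambda>x. (T x)\<^sup>2) - a\<^sup>2) / \<rho>\<^sup>2"
    unfolding Ecube_add Ecube_diff Ecube_cmult Ecube_const ET using assms
    by (simp add: field_simps power2_eq_square)
  finally have second:
    "Ecube n (\<lambda>x. (noise_increment n \<rho> f x)\<^sup>2) = (Ecube n (\<lambda>x. (T x)\<^sup>2) - a\<^sup>2) / \<rho>\<^sup>2" .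
  have "Ecube n (\<lambda>x. (f x - a) * noise_increment n \<rho> f x)
      = Ecube n (\<lambda>x. (1 / \<rho>) * (f x * T x) - (a / \<rho>) * T x - (a / \<rho>) * f x + a\<^sup>2 / \<rho>)"
    unfolding noise_increment_def T_def a_def using assms
    by (intro Ecube_cong) (simp add: power2_eq_square field_simps)
  also have "\<dots> = (Ecube n (\<lambda>x. f x * T x) - a\<^sup>2) / \<rho>"
    unfolding Ecube_add Ecube_diff Ecube_cmult Ecube_const ET a_def[symmetric] using assms
    by (simp add: field_simps power2_eq_square)
  finally have mixed:
    "Ecube n (\<lambda>x. (f x - a) * noise_increment n \<rho> f x) = (Ecube n (\<lambda>x. f x * T x) - a\<^sup>2) / \<rho>" .
  have "Ecube n (\<lambda>x. (T x)\<^sup>2) - a\<^sup>2 \<le> \<rho>\<^sup>2 * ((1 - \<rho>) * W1 n f + (Ecube n (\<lambda>x. f x * T x) - a\<^sup>2))"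
    using noise_stability_bound[OF assms, of n f] unfolding T_def a_def by (simp add: algebra_simps)
  then have "(Ecube n (\<lambda>x. (T x)\<^sup>2) - a\<^sup>2) / \<rho>\<^sup>2
      \<le> (1 - \<rho>) * W1 n f + (Ecube n (\<lambda>x. f x * T x) - a\<^sup>2)"
    using assms by (simp add: pos_divide_le_eq mult.commute)
  then show ?thesis
    unfolding second a_def[symmetric] mixed using assms by simp
qed

definition cube_fiber ::
    "nat \<Rightarrow> ((nat \<Rightarrow> real) \<Rightarrow> real) \<Rightarrow> ((nat \<Rightarrow> real) \<Rightarrow> real) \<Rightarrow> real \<Rightarrow> real \<Rightarrow> (nat \<Rightarrow> real) set"
  where "cube_fiber n S X s t = {x \<in> cube n. S x = s \<and> X x = t}"

definition cond_law :: "nat \<Rightarrow> ((nat \<Rightarrow> real) \<Rightarrow> real) \<Rightarrow> ((nat \<Rightarrow> real) \<Rightarrow> real)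
    \<Rightarrow> ((nat \<Rightarrow> real) \<Rightarrow> real) \<Rightarrow> real \<Rightarrow> real \<Rightarrow> real pmf" where
  "cond_law n S X Z s t =
     (if cube_fiber n S X s t = {} then return_pmf 0
      else map_pmf Z (pmf_of_set (cube_fiber n S X s t)))"

lemma finite_cube_fiber [simp]: "finite (cube_fiber n S X s t)"
  unfolding cube_fiber_def by simp

lemma Ecube_by_fibers:
  assumes "finite Q" "\<forall>x\<in>cube n. (S x, X x) \<in> Q"
  shows "Ecube n h = (\<Sum>(s, t)\<in>Q. \<Sum>x\<in>cube_fiber n S X s t. h x) / 2 ^ n"
proof -
  have "(\<Sum>x\<in>cube n. h x) = (\<Sum>q\<in>Q. \<Sum>x\<in>{x \<in> cube n. (S x, X x) = q}. h x)"
    using assms by (intro sum.group[symmetric]) auto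
  then show ?thesis
    unfolding Ecube_def cube_fiber_def by (simp add: case_prod_unfold prod_eq_iff)
qed

lemma sum_cube_fiber_cond_law:
  "(\<Sum>x\<in>cube_fiber n S X s t. h (Z x))
     = real (card (cube_fiber n S X s t)) * measure_pmf.expectation (cond_law n S X Z s t) h"
  by (cases "cube_fiber n S X s t = {}") (simp_all add: cond_law_def integral_pmf_of_set)

lemma set_pmf_cond_law: "set_pmf (cond_law n S X Z s t) \<subseteq> insert 0 (Z ` cube n)"
  by (auto simp: cond_law_def cube_fiber_def)

lemma finite_SXpts [simp]: "finite (SXpts a)"
  unfolding SXpts_def by simp

lemma sum_SXpts:
  "(\<Sum>(s, t)\<in>SXpts a. h s t) = h (-a) (-1) + h (-a) 1 + h (1 - a) (-1) + h (1 - a) 1"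
proof -
  have "-a \<noteq> 1 - a" by simp
  then show ?thesis unfolding SXpts_def by (simp add: add.assoc)
qed

lemma EJ_cond_law:
  assumes "\<forall>x\<in>cube n. (S x, X x) \<in> SXpts a"
    and "\<And>s t. (s, t) \<in> SXpts a \<Longrightarrow> PSX a \<beta> s t = real (card (cube_fiber n S X s t)) / 2 ^ n"
  shows "EJ a \<beta> (cond_law n S X Z) g = Ecube n (\<lambda>x. g (S x) (X x) (Z x))"
proof -
  have fiber: "(\<Sum>x\<in>cube_fiber n S X s t. g (S x) (X x) (Z x))
      = real (card (cube_fiber n S X s t)) * measure_pmf.expectation (cond_law n S X Z s t) (g s t)"
    for s t
    unfolding sum_cube_fiber_cond_law[symmetric] by (intro sum.cong refl) (simp add: cube_fiber_def)
  show ?thesis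
    unfolding EJ_def Ecube_by_fibers[OF finite_SXpts assms(1), where h = "\<lambda>x. g (S x) (X x) (Z x)"]
      sum_divide_distrib
    by (intro sum.cong refl) (auto simp: assms(2) fiber)
qed

lemma cube_fiber_frequencies:
  assumes "\<forall>x\<in>cube n. (S x, X x) \<in> SXpts a"
    and "Ecube n S = 0" "Ecube n X = 0" "Ecube n (\<lambda>x. S x * X x) = \<beta>"
  shows "\<And>s t. (s, t) \<in> SXpts a \<Longrightarrow> PSX a \<beta> s t = real (card (cube_fiber n S X s t)) / 2 ^ n"
    and "\<beta> \<le> min a (1 - a)"
proof -
  define N where "N s t = real (card (cube_fiber n S X s t)) / 2 ^ n" for s t
  have moment: "Ecube n (\<lambda>x. g (S x) (X x))
      = N (-a) (-1) * g (-a) (-1) + N (-a) 1 * g (-a) 1 + N (1 - a) (-1) * g (1 - a) (-1)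
        + N (1 - a) 1 * g (1 - a) 1" for g
  proof -
    have "(\<Sum>x\<in>cube_fiber n S X s t. g (S x) (X x)) = real (card (cube_fiber n S X s t)) * g s t"
      for s t by (simp add: cube_fiber_def)
    then show ?thesis
      unfolding Ecube_by_fibers[OF finite_SXpts assms(1), where h = "\<lambda>x. g (S x) (X x)"]
        sum_SXpts N_def
      by (simp add: SXpts_def add_divide_distrib)
  qed
  have "N (-a) (-1) + N (-a) 1 + N (1 - a) (-1) + N (1 - a) 1 = 1"
    using moment[of "\<lambda>_ _. 1"] by simp
  moreover have "N (1 - a) (-1) + N (1 - a) 1 = a"
    using moment[of "\<lambda>s _. s + a"] assms(2) by (simp add: Ecube_add)
  moreover have "- N (-a) (-1) + N (-a) 1 - N (1 - a) (-1) + N (1 - a) 1 = 0"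
    using moment[of "\<lambda>_ t. t"] assms(3) by simp
  moreover have "N (1 - a) 1 - N (1 - a) (-1) = \<beta>"
    using moment[of "\<lambda>s t. (s + a) * t"] assms(3,4)
    by (simp add: distrib_right Ecube_add Ecube_cmult)
  ultimately have N_values: "N (-a) (-1) = (1 - a + \<beta>) / 2" "N (-a) 1 = (1 - a - \<beta>) / 2"
    "N (1 - a) (-1) = (a - \<beta>) / 2" "N (1 - a) 1 = (a + \<beta>) / 2"
    by (simp_all add: algebra_simps)
  show "\<beta> \<le> min a (1 - a)"
  proof -
    have "0 \<le> N (-a) 1" "0 \<le> N (1 - a) (-1)" unfolding N_def by simp_all
    then show ?thesis using N_values by simp
  qed
  show "PSX a \<beta> s t = real (card (cube_fiber n S X s t)) / 2 ^ n" if "(s, t) \<in> SXpts a" for s t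
    using that N_values unfolding N_def[symmetric] by (auto simp: SXpts_def PSX_def)
qed

lemma maxcoef_attained:
  assumes "0 < n"
  obtains i where "i < n" "maxcoef n f = \<bar>fhat1 n f i\<bar>"
  using Max_in[of "(\<lambda>i. \<bar>fhat1 n f i\<bar>) ` {..<n}"] assms that unfolding maxcoef_def by fastforce

lemma coordinate_fiber_frequencies:
  assumes f: "boolean_fun n f" "Ecube n f = a" and i: "i < n" and \<sigma>: "\<sigma> = 1 \<or> \<sigma> = -1"
  defines "S \<equiv> \<lambda>x. f x - a" and "X \<equiv> \<lambda>x. \<sigma> * x i"
  shows "\<forall>x\<in>cube n. (S x, X x) \<in> SXpts a"
    and "\<And>s t. (s, t) \<in> SXpts a
      \<Longrightarrow> PSX a (\<sigma> * fhat1 n f i) s t = real (card (cube_fiber n S X s t)) / 2 ^ n"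
    and "\<sigma> * fhat1 n f i \<le> min a (1 - a)"
proof -
  show SX: "\<forall>x\<in>cube n. (S x, X x) \<in> SXpts a"
  proof
    fix x assume "x \<in> cube n"
    then have "f x = 0 \<or> f x = 1" "x i = -1 \<or> x i = 1"
      using f(1) cube_coord[OF _ i] by (auto simp: boolean_fun_def)
    then show "(S x, X x) \<in> SXpts a"
      using \<sigma> by (auto simp: S_def X_def SXpts_def)
  qed
  have ES: "Ecube n S = 0"
    unfolding S_def Ecube_diff f(2) by simp
  have EX: "Ecube n X = 0"
    unfolding X_def Ecube_cmult Ecube_coord[OF i] by simp
  have "Ecube n (\<lambda>x. S x * X x) = Ecube n (\<lambda>x. \<sigma> * (f x * x i) - \<sigma> * a * x i)"
    unfolding S_def X_def by (intro Ecube_cong) (simp add: algebra_simps)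
  then have ESX: "Ecube n (\<lambda>x. S x * X x) = \<sigma> * fhat1 n f i"
    unfolding Ecube_diff Ecube_cmult Ecube_coord[OF i] fhat1_def[symmetric] by simp
  show "\<And>s t. (s, t) \<in> SXpts a
      \<Longrightarrow> PSX a (\<sigma> * fhat1 n f i) s t = real (card (cube_fiber n S X s t)) / 2 ^ n"
    and "\<sigma> * fhat1 n f i \<le> min a (1 - a)"
    using cube_fiber_frequencies[OF SX ES EX ESX] by simp_all
qed

lemma Ups_feasible_of_boolean_fun:
  assumes f: "boolean_fun n f" "Ecube n f = a"
    and \<rho>: "0 < \<rho>" "\<rho> < 1" and "0 < n"
    and W: "W1 n f \<le> \<omega> a (maxcoef n f)"
  shows "\<exists>\<beta> K. (\<beta>, K) \<in> Ups_feasible \<rho> a \<omega> \<and>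
    EJ a \<beta> K (\<lambda>s x z. \<Phi> (a + \<rho> * z)) = Ecube n (\<lambda>x. \<Phi> (noise_op n \<rho> f x))"
proof -
  obtain i where i: "i < n" "maxcoef n f = \<bar>fhat1 n f i\<bar>"
    using maxcoef_attained[OF \<open>0 < n\<close>] by blast
  define \<beta> where "\<beta> = maxcoef n f"
  define \<sigma> :: real where "\<sigma> = (if fhat1 n f i \<ge> 0 then 1 else -1)"
  define S :: "(nat \<Rightarrow> real) \<Rightarrow> real" where "S = (\<lambda>x. f x - a)"
  define X :: "(nat \<Rightarrow> real) \<Rightarrow> real" where "X = (\<lambda>x. \<sigma> * x i)"
  define Z where "Z = noise_increment n \<rho> f"
  define K where "K = cond_law n S X Z"
  have \<sigma>_fhat1: "\<sigma> * fhat1 n f i = \<beta>"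
    using i by (simp add: \<beta>_def \<sigma>_def)
  have "\<sigma> = 1 \<or> \<sigma> = -1"
    by (simp add: \<sigma>_def)
  note law = coordinate_fiber_frequencies[OF f i(1) this, folded S_def X_def, unfolded \<sigma>_fhat1]
  have SX: "\<forall>x\<in>cube n. (S x, X x) \<in> SXpts a"
    using law(1) by (simp add: S_def X_def)
  have EJ_K: "EJ a \<beta> K g = Ecube n (\<lambda>x. g (S x) (X x) (Z x))" for g
    unfolding K_def using SX law(2) by (rule EJ_cond_law)
  have T_eq: "a + \<rho> * Z x = noise_op n \<rho> f x" for x
    using noise_op_eq_mean_plus_increment[of \<rho> n f x] \<rho> f(2) by (simp add: Z_def)
  have range: "0 \<le> a + \<rho> * z \<and> a + \<rho> * z \<le> 1" if "z \<in> set_pmf (K s t)" for s t z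
  proof -
    have "z = 0 \<or> (\<exists>x\<in>cube n. z = Z x)"
      using that set_pmf_cond_law[of n S X Z s t] unfolding K_def by blast
    then show ?thesis
      using Ecube_boolean_range[OF f(1)] noise_op_boolean_range[OF f(1)] \<rho>
      by (auto simp: f(2) T_eq)
  qed
  have EZ: "EJ a \<beta> K (\<lambda>s x z. z) = 0"
    unfolding EJ_K Z_def by (rule Ecube_noise_increment)
  have EXZ: "EJ a \<beta> K (\<lambda>s x z. x * z) = \<beta>"
    unfolding EJ_K X_def Z_def mult.assoc Ecube_cmult
    using Ecube_coord_noise_increment[of \<rho> i n f] \<rho> i(1) \<sigma>_fhat1 by simp
  have EZ2: "EJ a \<beta> K (\<lambda>s x z. z\<^sup>2) \<le> (1 - \<rho>) * \<omega> a \<beta> + \<rho> * EJ a \<beta> K (\<lambda>s x z. s * z)"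
  proof -
    have "(1 - \<rho>) * W1 n f \<le> (1 - \<rho>) * \<omega> a \<beta>"
      using W \<rho> by (intro mult_left_mono) (simp_all add: \<beta>_def)
    moreover have "EJ a \<beta> K (\<lambda>s x z. z\<^sup>2) \<le> (1 - \<rho>) * W1 n f + \<rho> * EJ a \<beta> K (\<lambda>s x z. s * z)"
      using noise_increment_second_moment[of \<rho> n f] \<rho>
      unfolding EJ_K Z_def S_def f(2) by simp
    ultimately show ?thesis by linarith
  qed
  have "(\<beta>, K) \<in> Ups_feasible \<rho> a \<omega>"
    unfolding Ups_feasible_def using i law(3) range EZ EXZ EZ2 by (auto simp: \<beta>_def)
  moreover have "EJ a \<beta> K (\<lambda>s x z. \<Phi> (a + \<rho> * z)) = Ecube n (\<lambda>x. \<Phi> (noise_op n \<rho> f x))"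
    unfolding EJ_K T_eq ..
  ultimately show ?thesis by blast
qed

lemma finite_image_boolean_fun:
  fixes F :: "((nat \<Rightarrow> real) \<Rightarrow> real) \<Rightarrow> 'a"
  assumes "\<And>f g. (\<And>x. x \<in> cube n \<Longrightarrow> f x = g x) \<Longrightarrow> F f = F g"
  shows "finite (F ` {f. boolean_fun n f \<and> P f})"
proof (rule finite_subset)
  show "F ` {f. boolean_fun n f \<and> P f} \<subseteq> F ` PiE (cube n) (\<lambda>_. {0, 1})"
  proof
    fix v assume "v \<in> F ` {f. boolean_fun n f \<and> P f}"
    then obtain f where "boolean_fun n f" "v = F f" by blast
    then have "restrict f (cube n) \<in> PiE (cube n) (\<lambda>_. {0, 1})" "v = F (restrict f (cube n))"
      using assms[of f "restrict f (cube n)"] by (auto simp: boolean_fun_def)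
    then show "v \<in> F ` PiE (cube n) (\<lambda>_. {0, 1})" by blast
  qed
qed (intro finite_imageI finite_PiE; simp)

lemma boolean_fun_with_mean:
  assumes "0 \<le> a" "a \<le> 1" "2 ^ n * a \<in> \<int>"
  obtains f where "boolean_fun n f" "Ecube n f = a"
proof -
  obtain k :: int where k: "2 ^ n * a = of_int k"
    using assms(3) Ints_cases by metis
  have "0 \<le> real_of_int k" "real_of_int k \<le> 2 ^ n"
    using assms(1,2) unfolding k[symmetric] by simp_all
  then have "0 \<le> k" "k \<le> 2 ^ n"
    by (simp, metis of_int_le_iff of_int_numeral of_int_power)
  then obtain B where B: "B \<subseteq> cube n" "card B = nat k"
    using obtain_subset_with_card_n[of "nat k" "cube n"] by (auto simp: card_cube nat_le_iff)
  define f where "f x = (if x \<in> B then 1 else 0 :: real)" for x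
  have "boolean_fun n f"
    unfolding boolean_fun_def f_def by simp
  moreover have "Ecube n f = a"
    unfolding Ecube_def f_def using B \<open>0 \<le> k\<close> k
    by (simp add: sum.If_cases Int_absorb1 field_simps)
  ultimately show ?thesis using that by blast
qed

lemma MaxStab_attained:
  assumes "0 \<le> a" "a \<le> 1" "2 ^ n * a \<in> \<int>"
  obtains f where "boolean_fun n f" "Ecube n f = a"
    "MaxStab n \<rho> \<Phi> a = Ecube n (\<lambda>x. \<Phi> (noise_op n \<rho> f x))"
proof -
  define V where "V f = Ecube n (\<lambda>x. \<Phi> (noise_op n \<rho> f x))" for f
  have stab_values: "{Ecube n (\<lambda>x. \<Phi> (noise_op n \<rho> f x)) | f. boolean_fun n f \<and> Ecube n f = a}
      = V ` {f. boolean_fun n f \<and> Ecube n f = a}"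
    unfolding V_def by blast
  have "finite (V ` {f. boolean_fun n f \<and> Ecube n f = a})"
    unfolding V_def by (intro finite_image_boolean_fun Ecube_cong) (simp cong: noise_op_cong)
  moreover have "V ` {f. boolean_fun n f \<and> Ecube n f = a} \<noteq> {}"
    using boolean_fun_with_mean[OF assms] by blast
  ultimately have "MaxStab n \<rho> \<Phi> a \<in> V ` {f. boolean_fun n f \<and> Ecube n f = a}"
    unfolding MaxStab_def stab_values by (rule Max_in)
  then show ?thesis using that unfolding V_def by blast
qed

lemma W1_le_Wn:
  assumes "boolean_fun n f"
  shows "W1 n f \<le> Wn n (Ecube n f) (maxcoef n f)"
proof -
  have "W_feasible n (Ecube n f) (maxcoef n f)
      = {g. boolean_fun n g \<and> (Ecube n g = Ecube n f \<and> maxcoef n g = maxcoef n f)}"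
    unfolding W_feasible_def by simp
  moreover have
    "finite (W1 n ` {g. boolean_fun n g \<and> (Ecube n g = Ecube n f \<and> maxcoef n g = maxcoef n f)})"
    unfolding W1_def fhat1_def by (intro finite_image_boolean_fun) (simp cong: Ecube_cong)
  ultimately show ?thesis
    unfolding Wn_def using assms by (intro Max_ge) (auto simp: W_feasible_def)
qed

theorem theorem3p4:
  fixes n :: nat and \<rho> a :: real and \<Phi> :: "real \<Rightarrow> real"
    and \<omega> :: "real \<Rightarrow> real \<Rightarrow> real"
  assumes "continuous_on {0..1} \<Phi>" and "strictly_convex_on {0..1} \<Phi>"
    and "\<And>a' \<beta>. W_feasible n a' \<beta> \<noteq> {} \<Longrightarrow> Wn n a' \<beta> \<le> \<omega> a' \<beta>"
    and "0 < a" "a < 1" "0 < \<rho>" "\<rho> < 1"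
    and "2 ^ n * a \<in> \<int>"
  shows "ereal (MaxStab n \<rho> \<Phi> a) \<le> Upsilon \<rho> \<Phi> \<omega> a"
proof -
  have "a \<notin> \<int>"
    using assms(4,5) by (auto elim!: Ints_cases)
  then have "n \<noteq> 0"
    using assms(8) by (metis mult_1 power_0)
  obtain f where f: "boolean_fun n f" "Ecube n f = a"
    and max: "MaxStab n \<rho> \<Phi> a = Ecube n (\<lambda>x. \<Phi> (noise_op n \<rho> f x))"
    using MaxStab_attained[of a n] assms(4,5,8) by auto
  have "f \<in> W_feasible n a (maxcoef n f)"
    unfolding W_feasible_def using f by simp
  then have "W1 n f \<le> \<omega> a (maxcoef n f)"
    using W1_le_Wn[OF f(1)] assms(3) f(2) by fastforce
  then obtain \<beta> K where "(\<beta>, K) \<in> Ups_feasible \<rho> a \<omega>"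
    and "EJ a \<beta> K (\<lambda>s x z. \<Phi> (a + \<rho> * z)) = MaxStab n \<rho> \<Phi> a"
    using Ups_feasible_of_boolean_fun[OF f assms(6,7)] \<open>n \<noteq> 0\<close> max by fastforce
  then show ?thesis
    unfolding Upsilon_def by (force intro: SUP_upper2)
qed

end
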